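(* Let $\Sigma\in\mathbb{R}^{N\times N}$ be a diagonal matrix with positive diagonal, $\mu\in\mathbb{R}^N$, $\gamma\in[0,1]$, and $\mathcal T$ any binary tree whose leaves are the assets $1,\dots,N$. Then the weight vector produced by the HRP-$\Sigma\mu$ algorithm is proportional to the Markowitz solution $\Sigma^{-1}\mu$.
   Context: HRP-$\Sigma\mu$ algorithm (inputs $\Sigma,\mu,\mathcal T,\gamma$), defined recursively. At a leaf (asset $i$) return $\hat w=(1)$, $v=\Sigma_{ii}$, $s=\mu_i$. At an internal node $n$ with left and right subtrees having leaf index sets $L,R$: recursively obtain $(\hat w_L,v_L,s_L)$ and $(\hat w_R,v_R,s_R)$; set $c=\hat w_L^\top\Sigma_{LR}\hat w_R$, $\Delta=v_Lv_R-\gamma^2c^2$, $\alpha_L^{\mathrm{raw}}=(v_Rs_L-\gamma cs_R)/\Delta$, $\alpha_R^{\mathrm{raw}}=(v_Ls_R-\gamma cs_L)/\Delta$, $Z=|\alpha_L^{\mathrm{raw}}|+|\alpha_R^{\mathrm{raw}}|$, $\alpha_k=\alpha_k^{\mathrm{raw}}/Z$; the node representative is the stacked vector $\hat w_n=(\alpha_L\hat w_L,\alpha_R\hat w_R)\in\mathbb{R}^{L\cup R}$, with $v_n=\hat w_n^\top\Sigma_{nn}\hat w_n$ and $s_n=\hat w_n^\top\mu_n$. The output weight vector is the representative at the root. *)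

theory Defs
  imports "HOL-Analysis.Analysis"
begin

datatype 'a btree = Leaf 'a | Node "'a btree" "'a btree"

fun leaves :: "'a btree \<Rightarrow> 'a list" where
  "leaves (Leaf i) = [i]"
| "leaves (Node l r) = leaves l @ leaves r"

text \<open>HRP-Sg-mu recursion. Returns (representative weight vector, supported on the
  leaves of the subtree and zero elsewhere; its variance v; its score s).\<close>
fun hrp :: "real^'n^'n \<Rightarrow> real^'n \<Rightarrow> real \<Rightarrow> 'n btree \<Rightarrow> ('n \<Rightarrow> real) \<times> real \<times> real" where
  "hrp Sg mu gamma (Leaf i) = ((\<lambda>j. if j = i then 1 else 0), Sg $ i $ i, mu $ i)"
| "hrp Sg mu gamma (Node l r) =
    (let (wL, vL, sL) = hrp Sg mu gamma l;
         (wR, vR, sR) = hrp Sg mu gamma r;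
         L = set (leaves l); R = set (leaves r);
         c = (\<Sum>i\<in>L. \<Sum>j\<in>R. wL i * Sg $ i $ j * wR j);
         D = vL * vR - gamma\<^sup>2 * c\<^sup>2;
         aLr = (vR * sL - gamma * c * sR) / D;
         aRr = (vL * sR - gamma * c * sL) / D;
         Z = \<bar>aLr\<bar> + \<bar>aRr\<bar>;
         aL = aLr / Z; aR = aRr / Z;
         w = (\<lambda>k. if k \<in> L then aL * wL k else if k \<in> R then aR * wR k else 0);
         v = (\<Sum>i\<in>L \<union> R. \<Sum>j\<in>L \<union> R. w i * Sg $ i $ j * w j);
         s = (\<Sum>i\<in>L \<union> R. w i * mu $ i)
     in (w, v, s))"

definition hrp_weights :: "real^'n^'n \<Rightarrow> real^'n \<Rightarrow> real \<Rightarrow> 'n btree \<Rightarrow> real^'n" where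
  "hrp_weights Sg mu gamma T = (\<chi> k. fst (hrp Sg mu gamma T) k)"

end

theory Submission
  imports Defs
begin

text \<open>For diagonal \<open>\<Sigma>\<close> the cross-covariance \<open>c\<close> of two disjoint clusters vanishes. By induction every cluster representative satisfies
  \<open>s w\<^sub>k = v (\<Sigma>\<^sup>-\<^sup>1\<mu>)\<^sub>k\<close> on its leaves; the invariant must be homogeneous because a
  leaf with \<open>\<mu>\<^sub>i = 0\<close> has weight 1. At an internal node it gives
  \<open>(s\<^sub>L / v\<^sub>L) w\<^sub>L = \<Sigma>\<^sup>-\<^sup>1\<mu>\<close> on the left leaves and likewise on the right, so the new
  representative is \<open>\<Sigma>\<^sup>-\<^sup>1\<mu> / Z\<close> (or zero when \<open>\<Delta> = 0\<close>), which again satisfies the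
  invariant. At the root \<open>v = 0\<close> forces \<open>w = 0\<close>, and otherwise \<open>w = (v / s) \<Sigma>\<^sup>-\<^sup>1\<mu>\<close>.\<close>

lemma matrix_inv_mult_cancel:
  fixes A :: "'a::field^'n^'n"
  assumes "invertible A"
  shows "matrix_inv A *v (A *v x) = x"
proof -
  have "matrix_inv A ** A = mat 1"
    using someI_ex[OF assms[unfolded invertible_def]] by (simp add: matrix_inv_def)
  then show ?thesis by (simp add: matrix_vector_mul_assoc)
qed

lemma diagonal_matrix_inv_mult:
  fixes A :: "'a::field^'n^'n"
  assumes diag: "\<And>i j. i \<noteq> j \<Longrightarrow> A $ i $ j = 0" and nz: "\<And>i. A $ i $ i \<noteq> 0"
  shows "matrix_inv A *v y = (\<chi> i. y $ i / A $ i $ i)"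
proof -
  have "invertible A"
    using nz by (simp add: invertible_det_nz det_diagonal[OF diag])
  moreover have "A *v (\<chi> i. y $ i / A $ i $ i) = y"
  proof -
    have "(\<Sum>j\<in>UNIV. A $ i $ j * (y $ j / A $ j $ j)) = y $ i" for i
    proof -
      have "(\<Sum>j\<in>UNIV. A $ i $ j * (y $ j / A $ j $ j))
          = (\<Sum>j\<in>UNIV. if j = i then A $ i $ i * (y $ i / A $ i $ i) else 0)"
        by (rule sum.cong) (auto simp: diag)
      then show ?thesis using nz[of i] by simp
    qed
    then show ?thesis by (simp add: matrix_vector_mult_def vec_eq_iff)
  qed
  ultimately show ?thesis by (metis matrix_inv_mult_cancel)
qed

lemma diagonal_quadratic_form:
  fixes A :: "'a::comm_semiring_1^'n^'n"
  assumes diag: "\<And>i j. i \<noteq> j \<Longrightarrow> A $ i $ j = 0" and "finite S"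
  shows "(\<Sum>i\<in>S. \<Sum>j\<in>S. w i * A $ i $ j * w j) = (\<Sum>i\<in>S. (w i)\<^sup>2 * A $ i $ i)"
proof (rule sum.cong[OF refl])
  fix i assume "i \<in> S"
  have "(\<Sum>j\<in>S. w i * A $ i $ j * w j) = (\<Sum>j\<in>S. if j = i then w i * A $ i $ i * w i else 0)"
    by (rule sum.cong) (auto simp: diag)
  also have "\<dots> = (w i)\<^sup>2 * A $ i $ i"
    using \<open>finite S\<close> \<open>i \<in> S\<close> by (simp add: power2_eq_square ac_simps)
  finally show "(\<Sum>j\<in>S. w i * A $ i $ j * w j) = (w i)\<^sup>2 * A $ i $ i" .
qed

lemma diagonal_quadratic_form_eq_0_iff:
  fixes A :: "real^'n^'n"
  assumes diag: "\<And>i j. i \<noteq> j \<Longrightarrow> A $ i $ j = 0" and pos: "\<And>i. A $ i $ i > 0"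
    and "finite S"
  shows "(\<Sum>i\<in>S. \<Sum>j\<in>S. w i * A $ i $ j * w j) = 0 \<longleftrightarrow> (\<forall>i\<in>S. w i = 0)"
proof -
  have "(\<Sum>i\<in>S. (w i)\<^sup>2 * A $ i $ i) = 0 \<longleftrightarrow> (\<forall>i\<in>S. (w i)\<^sup>2 * A $ i $ i = 0)"
    using \<open>finite S\<close> pos
    by (intro sum_nonneg_eq_0_iff) (auto intro!: mult_nonneg_nonneg simp: less_imp_le)
  then show ?thesis
    using pos by (simp add: diagonal_quadratic_form[OF diag \<open>finite S\<close>] less_imp_neq[symmetric])
qed

lemma diagonal_cross_form_eq_0:
  fixes A :: "'a::comm_semiring_1^'n^'n"
  assumes diag: "\<And>i j. i \<noteq> j \<Longrightarrow> A $ i $ j = 0" and "L \<inter> R = {}"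
  shows "(\<Sum>i\<in>L. \<Sum>j\<in>R. w i * A $ i $ j * u j) = 0"
proof -
  have "A $ i $ j = 0" if "i \<in> L" "j \<in> R" for i j
    using assms(2) that by (intro diag) blast
  then show ?thesis by simp
qed

lemma scaled_markowitz_moments:
  fixes Sg :: "real^'n^'n"
  assumes diag: "\<And>i j. i \<noteq> j \<Longrightarrow> Sg $ i $ j = 0" and "finite S"
    and w: "\<And>i. i \<in> S \<Longrightarrow> w i = t * (mu $ i / Sg $ i $ i)" and "k \<in> S"
  shows "(\<Sum>i\<in>S. w i * mu $ i) * w k
       = (\<Sum>i\<in>S. \<Sum>j\<in>S. w i * Sg $ i $ j * w j) * (mu $ k / Sg $ k $ k)"
proof -
  define q where "q = (\<Sum>i\<in>S. (mu $ i)\<^sup>2 / Sg $ i $ i)"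
  have score: "(\<Sum>i\<in>S. w i * mu $ i) = t * q"
    unfolding q_def sum_distrib_left by (rule sum.cong) (auto simp: w power2_eq_square)
  have "(\<Sum>i\<in>S. (w i)\<^sup>2 * Sg $ i $ i) = t\<^sup>2 * q"
    unfolding q_def sum_distrib_left by (rule sum.cong) (auto simp: w power2_eq_square)
  then have variance: "(\<Sum>i\<in>S. \<Sum>j\<in>S. w i * Sg $ i $ j * w j) = t\<^sup>2 * q"
    by (simp add: diagonal_quadratic_form[OF diag \<open>finite S\<close>])
  show ?thesis
    unfolding score variance w[OF \<open>k \<in> S\<close>] by (simp add: power2_eq_square)
qed

lemma scaled_eq_imp_proportional:
  fixes w d :: "'a \<Rightarrow> real"
  assumes scaled: "\<And>k. s * w k = v * d k" and "d k\<^sub>0 \<noteq> 0"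
    and "v = 0 \<Longrightarrow> w = (\<lambda>_. 0)"
  shows "\<exists>lam. \<forall>k. w k = lam * d k"
proof (cases "s = 0")
  case True
  then have "v = 0" using scaled[of k\<^sub>0] \<open>d k\<^sub>0 \<noteq> 0\<close> by simp
  then show ?thesis using assms(3) by (intro exI[of _ 0]) simp
next
  case False
  then show ?thesis using scaled by (intro exI[of _ "v / s"]) (simp add: field_simps)
qed

lemma hrp_moments:
  assumes "hrp Sg mu gamma T = (w, v, s)"
  shows "v = (\<Sum>i\<in>set (leaves T). \<Sum>j\<in>set (leaves T). w i * Sg $ i $ j * w j)"
    and "s = (\<Sum>i\<in>set (leaves T). w i * mu $ i)"
  using assms
  by (cases T; simp only: hrp.simps Let_def split_beta leaves.simps set_append prod.inject; force)+

lemma hrp_score_weight_eq_variance_markowitz: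
  fixes Sg :: "real^'n^'n"
  assumes diag: "\<And>i j. i \<noteq> j \<Longrightarrow> Sg $ i $ j = 0" and nz: "\<And>i. Sg $ i $ i \<noteq> 0"
  shows "hrp Sg mu gamma T = (w, v, s) \<Longrightarrow> distinct (leaves T)
    \<Longrightarrow> \<forall>k\<in>set (leaves T). s * w k = v * (mu $ k / Sg $ k $ k)"
proof (induction T arbitrary: w v s)
  case (Leaf i)
  then show ?case using nz[of i] by auto
next
  case (Node l r)
  obtain wL vL sL where hl: "hrp Sg mu gamma l = (wL, vL, sL)" by (metis prod_cases3)
  obtain wR vR sR where hr: "hrp Sg mu gamma r = (wR, vR, sR)" by (metis prod_cases3)
  define L R where "L = set (leaves l)" and "R = set (leaves r)"
  have IHL: "sL * wL k = vL * (mu $ k / Sg $ k $ k)" if "k \<in> L" for k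
    using Node.IH(1)[OF hl] Node.prems(2) that by (simp add: L_def)
  have IHR: "sR * wR k = vR * (mu $ k / Sg $ k $ k)" if "k \<in> R" for k
    using Node.IH(2)[OF hr] Node.prems(2) that by (simp add: R_def)
  have "L \<inter> R = {}"
    using Node.prems(2) by (simp add: L_def R_def)
  then have uncorrelated: "(\<Sum>i\<in>L. \<Sum>j\<in>R. wL i * Sg $ i $ j * wR j) = 0"
    by (simp add: diagonal_cross_form_eq_0[OF diag])
  define aL aR where "aL = vR * sL / (vL * vR)" and "aR = vL * sR / (vL * vR)"
  define Z where "Z = \<bar>aL\<bar> + \<bar>aR\<bar>"
  have "fst (hrp Sg mu gamma (Node l r))
      = (\<lambda>k. if k \<in> L then aL / Z * wL k else if k \<in> R then aR / Z * wR k else 0)"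
    unfolding L_def R_def aL_def aR_def Z_def
    by (simp only: hrp.simps hl hr Let_def split_beta fst_conv snd_conv
        uncorrelated[unfolded L_def R_def] mult_zero_left mult_zero_right diff_zero zero_power2)
  then have w: "w = (\<lambda>k. if k \<in> L then aL / Z * wL k else if k \<in> R then aR / Z * wR k else 0)"
    using Node.prems(1) by simp
  have "\<exists>t. \<forall>k\<in>L \<union> R. w k = t * (mu $ k / Sg $ k $ k)"
  proof (cases "vL * vR = 0")
    case True
    then have "aL = 0" "aR = 0" by (auto simp: aL_def aR_def)
    then show ?thesis by (intro exI[of _ 0]) (simp add: w)
  next
    case False
    have "aL * wL k = mu $ k / Sg $ k $ k" if "k \<in> L" for k
      using IHL[OF that] False by (simp add: aL_def field_simps)
    moreover have "aR * wR k = mu $ k / Sg $ k $ k" if "k \<in> R" for k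
      using IHR[OF that] False by (simp add: aR_def field_simps)
    ultimately show ?thesis by (intro exI[of _ "1 / Z"]) (auto simp: w)
  qed
  then obtain t where "\<forall>k\<in>L \<union> R. w k = t * (mu $ k / Sg $ k $ k)" ..
  then show ?case
    using hrp_moments[OF Node.prems(1)] scaled_markowitz_moments[OF diag, of "L \<union> R" w t mu]
    by (simp add: L_def R_def)
qed

theorem mainTheorem15:
  fixes Sg :: "real^'n^'n" and mu :: "real^'n" and gamma :: real and T :: "'n btree"
  assumes diag: "\<And>i j. i \<noteq> j \<Longrightarrow> Sg $ i $ j = 0"
    and pos: "\<And>i. Sg $ i $ i > 0"
    and gamma: "0 \<le> gamma" "gamma \<le> 1"
    and tree_leaves: "distinct (leaves T)" "set (leaves T) = UNIV"
    and mu_nz: "mu \<noteq> 0"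
  shows "\<exists>lam::real. hrp_weights Sg mu gamma T = lam *\<^sub>R (matrix_inv Sg *v mu)"
proof -
  have nz: "Sg $ i $ i \<noteq> 0" for i
    using pos[of i] by simp
  obtain w v s where hrp: "hrp Sg mu gamma T = (w, v, s)"
    by (metis prod_cases3)
  have scaled: "s * w k = v * (mu $ k / Sg $ k $ k)" for k
    using hrp_score_weight_eq_variance_markowitz[OF diag nz hrp tree_leaves(1)] tree_leaves(2)
    by simp
  have "v = 0 \<Longrightarrow> w = (\<lambda>_. 0)"
    using hrp_moments(1)[OF hrp] diagonal_quadratic_form_eq_0_iff[OF diag pos, of UNIV w]
      tree_leaves(2) by auto
  moreover obtain k\<^sub>0 where "mu $ k\<^sub>0 \<noteq> 0"
    using mu_nz by (auto simp: vec_eq_iff)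
  ultimately obtain lam where "\<forall>k. w k = lam * (mu $ k / Sg $ k $ k)"
    using scaled_eq_imp_proportional[of s w v, OF scaled] nz[of k\<^sub>0] by auto
  then have "hrp_weights Sg mu gamma T = lam *\<^sub>R (matrix_inv Sg *v mu)"
    by (simp add: hrp_weights_def hrp diagonal_matrix_inv_mult[OF diag nz] vec_eq_iff)
  then show ?thesis ..
qed

end
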